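(* Let $q > 5$ be a Sophie Germain prime with $z(2q+1) \mid \pi(q)$. Then the Legendre symbol $\left(\frac{5}{q}\right) = -1$ and $\pi(q) \mid 2(q+1)$.
   Context: A Sophie Germain prime is a prime $q$ with $2q+1$ prime. $F_n$ denotes the $n$-th Fibonacci number ($F_0=0$, $F_1=1$). For a prime $p$, $z(p)$ is the least positive integer $k$ with $p \mid F_k$. $\pi(n)$ is the Pisano period, the least period of $(F_m \bmod n)_{m\ge0}$. *)

theory Defs
  imports "HOL-Number_Theory.Number_Theory"
begin

definition fib_rank :: "nat \<Rightarrow> nat" where
  "fib_rank p = (LEAST k. 0 < k \<and> p dvd fib k)"

definition pisano :: "nat \<Rightarrow> nat" where
  "pisano n = (LEAST k. 0 < k \<and> (\<forall>m. fib (m + k) mod n = fib m mod n))"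

end

theory Submission
  imports Defs
begin

(* Write p = 2q + 1. Expanding Binet's formula binomially gives, for every prime p > 2,
   F p = (5/p) and 2 F (p + 1) = 1 + (5/p) (mod p); hence p divides F (p - 1) or F (p + 1),
   and so F (2q(q + 1)). If (5/q) = 1, the same congruences for q show that q - 1 is a period
   of F mod q, so z(p) | pi(q) | q - 1 and p divides
   gcd (F (q - 1)) (F (2q(q + 1))) = F (gcd (q - 1) (2q(q + 1))), a divisor of F 4 = 3,
   which is absurd. Hence (5/q) = -1; then F (q + 1) = 0 and F q = -1 (mod q) give
   F (m + q + 1) = - F m (mod q), so 2(q + 1) is a period. *)

definition binomial_even_sum :: "nat \<Rightarrow> nat" where
  "binomial_even_sum n = (\<Sum>k\<le>n. (n choose k) * (if even k then 5 ^ (k div 2) else 0))"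

definition binomial_odd_sum :: "nat \<Rightarrow> nat" where
  "binomial_odd_sum n = (\<Sum>k\<le>n. (n choose k) * (if odd k then 5 ^ (k div 2) else 0))"

lemma power_of_sqrt5:
  fixes t :: "'a :: comm_ring_1"
  assumes "t\<^sup>2 = 5"
  shows "t ^ k = of_nat (if even k then 5 ^ (k div 2) else 0)
                 + of_nat (if odd k then 5 ^ (k div 2) else 0) * t"
proof -
  have "t ^ (2 * j) = 5 ^ j" for j
    by (simp add: power_mult assms)
  then show ?thesis
    by (cases "even k") (auto elim!: evenE oddE)
qed

lemma one_plus_sqrt5_power:
  fixes t :: "'a :: comm_ring_1"
  assumes "t\<^sup>2 = 5"
  shows "(1 + t) ^ n = of_nat (binomial_even_sum n) + of_nat (binomial_odd_sum n) * t"
proof -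
  have "(1 + t) ^ n = (\<Sum>k\<le>n. of_nat (n choose k) * t ^ k)"
    using binomial_ring[of t 1 n] by (simp add: add.commute)
  also have "\<dots> = (\<Sum>k\<le>n. of_nat ((n choose k) * (if even k then 5 ^ (k div 2) else 0))
                  + of_nat ((n choose k) * (if odd k then 5 ^ (k div 2) else 0)) * t)"
    by (rule sum.cong[OF refl], subst power_of_sqrt5[OF assms]) (simp add: algebra_simps)
  also have "\<dots> = of_nat (binomial_even_sum n) + of_nat (binomial_odd_sum n) * t"
    by (simp add: binomial_even_sum_def binomial_odd_sum_def sum.distrib sum_distrib_right)
  finally show ?thesis .
qed

(* 2 F (n + 1) - F n is the Lucas number \<phi>^n + \<psi>^n. *)
lemma two_power_fib: "2 ^ n * fib n = 2 * binomial_odd_sum n"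
  and two_power_lucas:
    "2 ^ n * (2 * int (fib (Suc n)) - int (fib n)) = 2 * int (binomial_even_sum n)"
proof -
  define s :: real where "s = sqrt 5"
  have s0: "s \<noteq> 0" and s2: "s\<^sup>2 = 5" "(- s)\<^sup>2 = 5"
    by (simp_all add: s_def)
  have fib_real: "real (fib m) = ((1 + s) ^ m - (1 - s) ^ m) / (2 ^ m * s)" for m
    using fib_closed_form[of m]
    unfolding s_def power_divide diff_divide_distrib[symmetric] divide_divide_eq_left .
  have plus: "(1 + s) ^ n = of_nat (binomial_even_sum n) + of_nat (binomial_odd_sum n) * s"
    and minus: "(1 - s) ^ n = of_nat (binomial_even_sum n) - of_nat (binomial_odd_sum n) * s"
    using one_plus_sqrt5_power[OF s2(1)] one_plus_sqrt5_power[OF s2(2)] by simp_all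
  have "real (2 ^ n * fib n) = real (2 * binomial_odd_sum n)"
    using s0 by (simp add: fib_real plus minus)
  then show "2 ^ n * fib n = 2 * binomial_odd_sum n"
    by (simp only: of_nat_eq_iff)
  have "real_of_int (2 ^ n * (2 * int (fib (Suc n)) - int (fib n))) = 2 * binomial_even_sum n"
    using s0 s2 by (simp add: fib_real plus minus field_simps)
  then show "2 ^ n * (2 * int (fib (Suc n)) - int (fib n)) = 2 * int (binomial_even_sum n)"
    by linarith
qed

lemma sum_binomial_prime_cong:
  fixes f :: "nat \<Rightarrow> nat"
  assumes p: "prime p"
  shows "[(\<Sum>k\<le>p. (p choose k) * f k) = f 0 + f p] (mod p)"
proof -
  have "{..p} = insert 0 (insert p {1..<p})" and "p > 0"
    using p prime_gt_0_nat by auto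
  then have "(\<Sum>k\<le>p. (p choose k) * f k) = f 0 + f p + (\<Sum>k\<in>{1..<p}. (p choose k) * f k)"
    by simp
  moreover have "p dvd (\<Sum>k\<in>{1..<p}. (p choose k) * f k)"
    using p by (intro dvd_sum) (simp add: dvd_choose_prime)
  ultimately show ?thesis
    by (metis cong_add_lcancel_0_nat cong_0_iff)
qed

lemma binomial_odd_sum_prime_cong:
  assumes "prime p" "odd p"
  shows "[binomial_odd_sum p = 5 ^ (p div 2)] (mod p)"
  using sum_binomial_prime_cong[OF assms(1), of "\<lambda>k. if odd k then 5 ^ (k div 2) else 0"] assms(2)
  by (simp add: binomial_odd_sum_def)

lemma binomial_even_sum_prime_cong:
  assumes "prime p" "odd p"
  shows "[binomial_even_sum p = 1] (mod p)"
  using sum_binomial_prime_cong[OF assms(1), of "\<lambda>k. if even k then 5 ^ (k div 2) else 0"] assms(2)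
  by (simp add: binomial_even_sum_def)

lemma cong_cancel_two_power_prime:
  fixes x y :: int
  assumes p: "prime p" "odd p" and eq: "2 ^ p * x = 2 * y"
  shows "[x = y] (mod int p)"
proof -
  have "[2 ^ (p - 1) = (1::nat)] (mod p)"
    using p by (intro fermat_theorem) (use primes_dvd_imp_eq[of p 2] in auto)
  then have "[2 ^ (p - 1) = (1::int)] (mod int p)"
    by (metis cong_int_iff of_nat_1 of_nat_numeral of_nat_power)
  moreover have "(2::int) ^ p = 2 * 2 ^ (p - 1)"
    using p by (simp add: power_eq_if prime_gt_0_nat)
  ultimately have "[2 * x = 2 ^ p * x] (mod int p)"
    by (metis cong_scalar_left cong_scalar_right cong_sym mult.right_neutral)
  then have "[2 * x = 2 * y] (mod int p)"
    by (simp add: eq)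
  moreover have "coprime 2 (int p)"
    using p by (simp add: coprime_commute)
  ultimately show ?thesis
    using cong_mult_lcancel by blast
qed

theorem fib_prime_cong_Legendre:
  assumes p: "prime p" "2 < p"
  shows "[int (fib p) = Legendre 5 (int p)] (mod int p)"
proof -
  have odd: "odd p"
    using p by (simp add: prime_odd_nat)
  have "2 ^ p * int (fib p) = 2 * int (binomial_odd_sum p)"
    using two_power_fib[of p] by (metis of_nat_mult of_nat_numeral of_nat_power)
  then have "[int (fib p) = int (binomial_odd_sum p)] (mod int p)"
    by (rule cong_cancel_two_power_prime[OF p(1) odd])
  also have "[int (binomial_odd_sum p) = 5 ^ (p div 2)] (mod int p)"
    using binomial_odd_sum_prime_cong[OF p(1) odd] by (simp add: cong_int_iff[symmetric])
  also have "p div 2 = (p - 1) div 2"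
    using odd by (elim oddE) simp
  also have "[5 ^ ((p - 1) div 2) = Legendre 5 (int p)] (mod int p)"
    by (rule cong_sym, rule euler_criterion) (use p in auto)
  finally show ?thesis .
qed

lemma lucas_prime_cong:
  assumes p: "prime p" "2 < p"
  shows "[2 * int (fib (Suc p)) - int (fib p) = 1] (mod int p)"
proof -
  have odd: "odd p"
    using p by (simp add: prime_odd_nat)
  have "[2 * int (fib (Suc p)) - int (fib p) = int (binomial_even_sum p)] (mod int p)"
    by (rule cong_cancel_two_power_prime[OF p(1) odd two_power_lucas])
  also have "[int (binomial_even_sum p) = 1] (mod int p)"
    using binomial_even_sum_prime_cong[OF p(1) odd] by (metis cong_int_iff of_nat_1)
  finally show ?thesis .
qed

lemma fib_Suc_prime_cong:
  assumes p: "prime p" "2 < p"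
  shows "[2 * int (fib (Suc p)) = 1 + Legendre 5 (int p)] (mod int p)"
  using cong_add[OF lucas_prime_cong[OF p] fib_prime_cong_Legendre[OF p]] by simp

lemma fib_prime_cong_of_QuadRes:
  assumes p: "prime p" "2 < p" and L: "Legendre 5 (int p) = 1"
  shows "[int (fib (p - 1)) = 0] (mod int p)" and "[int (fib (p - 2)) = 1] (mod int p)"
proof -
  have F: "[int (fib p) = 1] (mod int p)"
    using fib_prime_cong_Legendre[OF p] L by simp
  have "[2 * int (fib (Suc p)) = 2 * 1] (mod int p)"
    using fib_Suc_prime_cong[OF p] L by simp
  then have F_Suc: "[int (fib (Suc p)) = 1] (mod int p)"
    using p by (subst (asm) cong_mult_lcancel) (auto simp: prime_odd_nat)
  obtain r where r: "p = Suc (Suc r)"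
    using p(2) by (cases p; cases "p - 1") auto
  have diff_Suc: "int (fib (Suc p)) - int (fib p) = int (fib (p - 1))"
    and diff_pred: "int (fib p) - int (fib (p - 1)) = int (fib (p - 2))"
    by (simp_all add: r)
  have "[int (fib (Suc p)) - int (fib p) = 1 - 1] (mod int p)"
    by (rule cong_diff[OF F_Suc F])
  then show F_pred: "[int (fib (p - 1)) = 0] (mod int p)"
    by (simp add: diff_Suc)
  have "[int (fib p) - int (fib (p - 1)) = 1 - 0] (mod int p)"
    by (rule cong_diff[OF F F_pred])
  then show "[int (fib (p - 2)) = 1] (mod int p)"
    by (simp only: diff_pred diff_zero)
qed

lemma fib_prime_cong_of_not_QuadRes:
  assumes p: "prime p" "2 < p" and L: "Legendre 5 (int p) = -1"
  shows "[int (fib (Suc p)) = 0] (mod int p)" and "[int (fib p) = -1] (mod int p)"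
proof -
  have "[2 * int (fib (Suc p)) = 2 * 0] (mod int p)"
    using fib_Suc_prime_cong[OF p] L by simp
  then show "[int (fib (Suc p)) = 0] (mod int p)"
    using p by (subst (asm) cong_mult_lcancel) (auto simp: prime_odd_nat)
  show "[int (fib p) = -1] (mod int p)"
    using fib_prime_cong_Legendre[OF p] L by simp
qed

lemma fib_add_cong:
  fixes n c :: int
  assumes "0 < k" "[int (fib k) = 0] (mod n)" "[int (fib (k - 1)) = c] (mod n)"
  shows "[int (fib (m + k)) = c * int (fib m)] (mod n)"
proof -
  obtain j where k: "k = Suc j"
    using assms(1) by (cases k) auto
  have "int (fib (m + k)) = int (fib k) * int (fib (Suc m)) + int (fib (k - 1)) * int (fib m)"
    using fib_add[of m j] by (simp add: k)
  also have "[\<dots> = 0 * int (fib (Suc m)) + c * int (fib m)] (mod n)"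
    using assms(2,3) by (intro cong_add cong_mult cong_refl)
  finally show ?thesis
    by simp
qed

lemma fib_add_mult_cong:
  fixes n c :: int
  assumes "0 < k" "[int (fib k) = 0] (mod n)" "[int (fib (k - 1)) = c] (mod n)"
  shows "[int (fib (m + j * k)) = c ^ j * int (fib m)] (mod n)"
proof (induction j)
  case 0
  show ?case
    by simp
next
  case (Suc j)
  have "[int (fib (m + j * k + k)) = c * int (fib (m + j * k))] (mod n)"
    by (rule fib_add_cong[OF assms])
  also have "[c * int (fib (m + j * k)) = c * (c ^ j * int (fib m))] (mod n)"
    using Suc.IH by (rule cong_scalar_left)
  finally show ?case
    by (simp add: algebra_simps)
qed

lemma pisano_dvd:
  assumes "0 < k" and "\<And>m. [fib (m + k) = fib m] (mod n)"
  shows "pisano n dvd k"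
  using assms
proof (induction k rule: less_induct)
  case (less k)
  let ?is_period = "\<lambda>k. 0 < k \<and> (\<forall>m. fib (m + k) mod n = fib m mod n)"
  have "?is_period k"
    using less.prems by (simp add: cong_def)
  then have "pisano n \<le> k" and P: "?is_period (pisano n)"
    unfolding pisano_def by (rule Least_le, rule LeastI)
  show ?case
  proof (cases "pisano n = k")
    case False
    have "[fib (m + (k - pisano n)) = fib m] (mod n)" for m
    proof -
      have "[fib (m + (k - pisano n)) = fib (m + (k - pisano n) + pisano n)] (mod n)"
        using P by (simp add: cong_def)
      also have "m + (k - pisano n) + pisano n = m + k"
        using \<open>pisano n \<le> k\<close> by simp
      finally show ?thesis
        using less.prems(2) cong_trans by blast
    qed
    then have "pisano n dvd k - pisano n"
      using False \<open>pisano n \<le> k\<close> P by (intro less.IH) auto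
    then show ?thesis
      using dvd_diffD[OF _ dvd_refl \<open>pisano n \<le> k\<close>] by blast
  qed simp
qed

lemma pisano_dvd_of_fib_cong:
  fixes c :: int
  assumes "0 < k" "0 < j" "[int (fib k) = 0] (mod int n)" "[int (fib (k - 1)) = c] (mod int n)"
    and "[c ^ j = 1] (mod int n)"
  shows "pisano n dvd j * k"
proof (rule pisano_dvd)
  show "0 < j * k"
    using assms(1,2) by simp
  fix m
  have "[int (fib (m + j * k)) = c ^ j * int (fib m)] (mod int n)"
    by (rule fib_add_mult_cong[OF assms(1,3,4)])
  also have "[c ^ j * int (fib m) = 1 * int (fib m)] (mod int n)"
    using assms(5) by (rule cong_scalar_right)
  finally show "[fib (m + j * k) = fib m] (mod n)"
    by (simp add: cong_int_iff[symmetric])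
qed

lemma fib_dvd_fib: "m dvd n \<Longrightarrow> fib m dvd fib n"
  by (metis fib_gcd gcd_nat.absorb_iff1 gcd_dvd2)

lemma dvd_fib_fib_rank:
  assumes "0 < m" "n dvd fib m"
  shows "n dvd fib (fib_rank n)"
  using LeastI[of "\<lambda>k. 0 < k \<and> n dvd fib k" m] assms unfolding fib_rank_def by blast

lemma Legendre_five_cases:
  assumes "5 < p"
  shows "Legendre 5 (int p) = 1 \<or> Legendre 5 (int p) = -1"
proof -
  have "\<not> int p dvd 5"
    using assms by (auto dest: zdvd_imp_le)
  then show ?thesis
    by (simp add: Legendre_def cong_0_iff)
qed

lemma safe_prime_dvd_fib:
  assumes "prime (2 * q + 1)" and q: "2 < q"
  shows "2 * q + 1 dvd fib (2 * q * (q + 1))"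
proof -
  define p where "p = 2 * q + 1"
  have p: "prime p" "2 < p" and "5 < p"
    using assms by (simp_all add: p_def)
  then have "[int (fib (p - 1)) = 0] (mod int p) \<or> [int (fib (Suc p)) = 0] (mod int p)"
    using Legendre_five_cases fib_prime_cong_of_QuadRes(1)[OF p] fib_prime_cong_of_not_QuadRes(1)[OF p]
    by blast
  then have "p dvd fib (p - 1) \<or> p dvd fib (Suc p)"
    by (simp add: cong_0_iff)
  moreover have "2 * q * (q + 1) = (p - 1) * (q + 1)" and "2 * q * (q + 1) = Suc p * q"
    by (simp_all add: p_def algebra_simps)
  then have "fib (p - 1) dvd fib (2 * q * (q + 1))" and "fib (Suc p) dvd fib (2 * q * (q + 1))"
    by (metis dvd_triv_left fib_dvd_fib)+
  ultimately have "p dvd fib (2 * q * (q + 1))"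
    using dvd_trans by blast
  then show ?thesis
    by (simp add: p_def)
qed

lemma safe_prime_not_dvd_fib_pred:
  assumes p: "prime (2 * q + 1)" and q: "2 < q"
  shows "\<not> 2 * q + 1 dvd fib (q - 1)"
proof
  assume "2 * q + 1 dvd fib (q - 1)"
  then have "2 * q + 1 dvd gcd (fib (q - 1)) (fib (2 * q * (q + 1)))"
    using safe_prime_dvd_fib[OF p q] by simp
  also have "\<dots> = fib (gcd (q - 1) (2 * q * (q + 1)))"
    by (simp add: fib_gcd)
  also have "\<dots> dvd fib 4"
  proof (rule fib_dvd_fib)
    have "2 * q * (q + 1) = (2 * q + 4) * (q - 1) + 4"
      using q by (cases q) (simp_all add: algebra_simps)
    then show "gcd (q - 1) (2 * q * (q + 1)) dvd 4"
      by (simp add: gcd_add_mult)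
  qed
  also have "fib 4 = 3"
    by (simp add: numeral_eq_Suc)
  finally show False
    using q by (auto dest: dvd_imp_le)
qed

theorem lemma6p3:
  fixes q :: nat
  assumes "prime q" and "prime (2 * q + 1)" and "q > 5"
    and "fib_rank (2 * q + 1) dvd pisano q"
  shows "Legendre 5 (int q) = -1 \<and> pisano q dvd 2 * (q + 1)"
proof -
  have q: "2 < q"
    using assms(3) by simp
  have rank: "2 * q + 1 dvd fib (fib_rank (2 * q + 1))"
    by (rule dvd_fib_fib_rank[OF _ safe_prime_dvd_fib[OF assms(2) q]]) (use q in simp)
  from Legendre_five_cases[OF assms(3)] show ?thesis
  proof
    assume "Legendre 5 (int q) = 1"
    then have "pisano q dvd 1 * (q - 1)"
      using fib_prime_cong_of_QuadRes[OF assms(1) q] q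
      by (intro pisano_dvd_of_fib_cong[where c = 1]) (simp_all add: numeral_2_eq_2)
    then have "fib (fib_rank (2 * q + 1)) dvd fib (q - 1)"
      using assms(4) by (simp add: fib_dvd_fib dvd_trans)
    then show ?thesis
      using rank safe_prime_not_dvd_fib_pred[OF assms(2) q] dvd_trans by blast
  next
    assume L: "Legendre 5 (int q) = -1"
    then have "pisano q dvd 2 * Suc q"
      using fib_prime_cong_of_not_QuadRes[OF assms(1) q]
      by (intro pisano_dvd_of_fib_cong[where c = "-1"]) simp_all
    with L show ?thesis
      by simp
  qed
qed

end
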